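(* For each integer $k\ge 2$, a $k$-regular friendship digraph exists if and only if there exists a $(k^2-k+1,k,1)$-SBIBD.
   Context: All digraphs are finite and have neither loops nor parallel arcs (a pair of opposite arcs $(u,v)$ and $(v,u)$ is allowed). A friendship digraph is a nontrivial digraph (at least two vertices) in which any two distinct vertices have exactly one common out-neighbor. A $k$-regular digraph is one in which every vertex has outdegree $k$ and indegree $k$. A $(v,k,\lambda)$-SBIBD (symmetric balanced incomplete block design) is a set $V$ of $v$ varieties (points) together with a collection of $v$ blocks, each a $k$-element subset of $V$, such that each variety lies in exactly $k$ blocks and each pair of distinct varieties lies in exactly $\lambda$ blocks. *)

theory Defs
  imports Main
begin

definition digraph :: "'a set \<Rightarrow> ('a \<times> 'a) set \<Rightarrow> bool" where
  "digraph V A \<longleftrightarrow> finite V \<and> A \<subseteq> V \<times> V \<and> (\<forall>x. (x, x) \<notin> A)"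

definition friendship_digraph :: "'a set \<Rightarrow> ('a \<times> 'a) set \<Rightarrow> bool" where
  "friendship_digraph V A \<longleftrightarrow> digraph V A \<and> card V \<ge> 2 \<and>
     (\<forall>x\<in>V. \<forall>y\<in>V. x \<noteq> y \<longrightarrow> (\<exists>!z. (x, z) \<in> A \<and> (y, z) \<in> A))"

definition regular_digraph :: "nat \<Rightarrow> 'a set \<Rightarrow> ('a \<times> 'a) set \<Rightarrow> bool" where
  "regular_digraph k V A \<longleftrightarrow> digraph V A \<and>
     (\<forall>x\<in>V. card {y. (x, y) \<in> A} = k \<and> card {y. (y, x) \<in> A} = k)"

text \<open>A (v,k,lambda)-SBIBD: point set P of size v and a family of v blocks B i (i in I,
  card I = v; repeated blocks allowed, as in "a collection of blocks").\<close>
definition sbibd :: "nat \<Rightarrow> nat \<Rightarrow> nat \<Rightarrow> 'a set \<Rightarrow> 'i set \<Rightarrow> ('i \<Rightarrow> 'a set) \<Rightarrow> bool" where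
  "sbibd v k lam P I B \<longleftrightarrow> finite P \<and> card P = v \<and> finite I \<and> card I = v \<and>
     (\<forall>i\<in>I. B i \<subseteq> P \<and> card (B i) = k) \<and>
     (\<forall>x\<in>P. card {i\<in>I. x \<in> B i} = k) \<and>
     (\<forall>x\<in>P. \<forall>y\<in>P. x \<noteq> y \<longrightarrow> card {i\<in>I. x \<in> B i \<and> y \<in> B i} = lam)"

end

theory Submission
  imports Defs "HOL-Combinatorics.Transposition"
begin

text \<open>The in-neighbourhoods of a k-regular friendship digraph are the blocks of a symmetric
  design with lambda = 1; counting the vertices through the k out-neighbours of a fixed vertex
  gives v = k(k - 1) + 1. Conversely, a design gives such a digraph as soon as the blocks can be
  attached bijectively to points not lying on them: put an arc x \<rightarrow> y whenever x lies on the
  block attached to y. Such an attachment is found by repeatedly swapping the blocks of a bad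
  point and a suitable partner, which exists by counting once 2k < v; for k = 2 the complete
  symmetric digraph on three vertices is a direct example.\<close>

lemma card_Collect_bij_betw:
  assumes "bij_betw \<phi> P I"
  shows "card {x\<in>P. Q (\<phi> x)} = card {i\<in>I. Q i}"
proof -
  have "bij_betw \<phi> {x\<in>P. Q (\<phi> x)} {i\<in>I. Q i}"
    using assms by (rule bij_betw_subset) (use assms in \<open>auto simp: bij_betw_def\<close>)
  then show ?thesis by (rule bij_betw_same_card)
qed

lemma card_Collect_eq_1_iff: "card {x. Q x} = 1 \<longleftrightarrow> (\<exists>!x. Q x)"
  by (metis is_singleton_altdef is_singleton_iff_ex1 mem_Collect_eq)

lemma exists_swap_partner:
  assumes "finite P" and \<phi>: "bij_betw \<phi> P I" and "p \<in> P"
    and Bp: "B (\<phi> p) \<subseteq> P" "card (B (\<phi> p)) = k"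
    and rep: "card {i\<in>I. p \<in> B i} = k" and "2 * k < card P"
  shows "\<exists>q\<in>P. p \<notin> B (\<phi> q) \<and> q \<notin> B (\<phi> p)"
proof (rule ccontr)
  assume "\<not> ?thesis"
  then have disj: "{q\<in>P. p \<notin> B (\<phi> q)} \<inter> (P - B (\<phi> p)) = {}" by blast
  have "finite I" using \<phi> \<open>finite P\<close> bij_betw_finite by blast
  have "card {q\<in>P. p \<notin> B (\<phi> q)} = card {i\<in>I. p \<notin> B i}"
    using \<phi> by (rule card_Collect_bij_betw)
  also have "{i\<in>I. p \<notin> B i} = I - {i\<in>I. p \<in> B i}" by blast
  also have "card \<dots> = card P - k"
    using \<open>finite I\<close> rep bij_betw_same_card[OF \<phi>] by (simp add: card_Diff_subset)
  finally have "card {q\<in>P. p \<notin> B (\<phi> q)} = card P - k" .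
  moreover have "card (P - B (\<phi> p)) = card P - k"
    using Bp \<open>finite P\<close> by (simp add: card_Diff_subset finite_subset)
  moreover have "card ({q\<in>P. p \<notin> B (\<phi> q)} \<union> (P - B (\<phi> p))) \<le> card P"
    using \<open>finite P\<close> by (intro card_mono) auto
  ultimately show False
    using disj \<open>finite P\<close> \<open>2 * k < card P\<close> by (simp add: card_Un_disjoint)
qed

lemma exists_bij_betw_avoiding_blocks:
  assumes "finite P" and "card I = card P"
    and blocks: "\<forall>i\<in>I. B i \<subseteq> P \<and> card (B i) = k"
    and rep: "\<forall>x\<in>P. card {i\<in>I. x \<in> B i} = k" and "2 * k < card P"
  shows "\<exists>\<phi>. bij_betw \<phi> P I \<and> (\<forall>x\<in>P. x \<notin> B (\<phi> x))"
proof -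
  have "\<exists>\<psi>. bij_betw \<psi> P I \<and> (\<forall>x\<in>P. x \<notin> B (\<psi> x))" if "bij_betw \<phi> P I" for \<phi>
    using that
  proof (induction "card {x\<in>P. x \<in> B (\<phi> x)}" arbitrary: \<phi> rule: less_induct)
    case less
    show ?case
    proof (cases "\<forall>x\<in>P. x \<notin> B (\<phi> x)")
      case True
      then show ?thesis using less.prems by blast
    next
      case False
      then obtain p where p: "p \<in> P" "p \<in> B (\<phi> p)" by blast
      have "\<phi> p \<in> I" using less.prems p(1) bij_betw_apply by fast
      then obtain q where q: "q \<in> P" "p \<notin> B (\<phi> q)" "q \<notin> B (\<phi> p)"
        using exists_swap_partner[OF \<open>finite P\<close> less.prems p(1)] blocks rep p(1)
          \<open>2 * k < card P\<close> by blast
      txt \<open>Swapping the blocks of p and q cures p without spoiling q.\<close>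
      define \<psi> where "\<psi> = \<phi> \<circ> transpose p q"
      have "bij_betw \<psi> P I"
        unfolding \<psi>_def using p(1) q(1) by (intro bij_betw_trans[OF _ less.prems]) simp
      moreover have "{x\<in>P. x \<in> B (\<psi> x)} \<subset> {x\<in>P. x \<in> B (\<phi> x)}"
        using p q by (auto simp: \<psi>_def transpose_def)
      then have "card {x\<in>P. x \<in> B (\<psi> x)} < card {x\<in>P. x \<in> B (\<phi> x)}"
        using \<open>finite P\<close> by (intro psubset_card_mono) auto
      ultimately show ?thesis using less.hyps by blast
    qed
  qed
  moreover have "finite I"
    by (rule card_ge_0_finite) (use \<open>card I = card P\<close> \<open>2 * k < card P\<close> in linarith)
  then obtain \<phi> where "bij_betw \<phi> P I"
    using finite_same_card_bij \<open>finite P\<close> \<open>card I = card P\<close> by metis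
  ultimately show ?thesis by blast
qed

lemma regular_friendship_digraph_card:
  assumes reg: "regular_digraph k V A" and fr: "friendship_digraph V A"
  shows "card V = k * (k - 1) + 1"
proof -
  have "finite V" and AV: "A \<subseteq> V \<times> V" and "card V \<ge> 2"
    using fr unfolding friendship_digraph_def digraph_def by auto
  have common: "\<exists>!z. (x, z) \<in> A \<and> (y, z) \<in> A" if "x \<in> V" "y \<in> V" "x \<noteq> y" for x y
    using fr that unfolding friendship_digraph_def by blast
  obtain x0 where "x0 \<in> V" using \<open>card V \<ge> 2\<close> by fastforce
  define N where "N = {z. (x0, z) \<in> A}"
  define C where "C z = {y. (y, z) \<in> A} - {x0}" for z
  have "finite N" unfolding N_def using AV \<open>finite V\<close> by (auto intro: finite_subset)
  have "V - {x0} = (\<Union>z\<in>N. C z)"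
  proof
    show "V - {x0} \<subseteq> (\<Union>z\<in>N. C z)"
      using common[OF \<open>x0 \<in> V\<close>] unfolding N_def C_def by blast
    show "(\<Union>z\<in>N. C z) \<subseteq> V - {x0}" unfolding C_def using AV by auto
  qed
  also have "card \<dots> = (\<Sum>z\<in>N. card (C z))"
  proof (rule card_UN_disjoint[OF \<open>finite N\<close>])
    show "\<forall>z\<in>N. finite (C z)" unfolding C_def using AV \<open>finite V\<close> by (auto intro: finite_subset)
    show "\<forall>z\<in>N. \<forall>z'\<in>N. z \<noteq> z' \<longrightarrow> C z \<inter> C z' = {}"
      using common[OF \<open>x0 \<in> V\<close>] AV unfolding N_def C_def by blast
  qed
  also have "\<dots> = (\<Sum>z\<in>N. k - 1)"
  proof (rule sum.cong)
    fix z assume "z \<in> N"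
    then have "z \<in> V" "x0 \<in> {y. (y, z) \<in> A}" using AV unfolding N_def by auto
    then show "card (C z) = k - 1" using reg unfolding C_def regular_digraph_def by simp
  qed simp
  also have "\<dots> = k * (k - 1)" using reg \<open>x0 \<in> V\<close> unfolding N_def regular_digraph_def by simp
  finally show ?thesis using \<open>x0 \<in> V\<close> \<open>finite V\<close> \<open>card V \<ge> 2\<close> by simp
qed

lemma regular_friendship_digraph_sbibd:
  assumes reg: "regular_digraph k V A" and fr: "friendship_digraph V A"
  shows "sbibd (card V) k 1 V V (\<lambda>z. {x. (x, z) \<in> A})"
proof -
  have "finite V" and AV: "A \<subseteq> V \<times> V"
    using fr unfolding friendship_digraph_def digraph_def by auto
  show ?thesis unfolding sbibd_def
  proof (intro conjI ballI impI)
    fix x assume "x \<in> V"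
    show "{y. (y, x) \<in> A} \<subseteq> V" using AV by blast
    show "card {y. (y, x) \<in> A} = k" using reg \<open>x \<in> V\<close> unfolding regular_digraph_def by blast
    have "{z\<in>V. x \<in> {y. (y, z) \<in> A}} = {z. (x, z) \<in> A}" using AV by blast
    then show "card {z\<in>V. x \<in> {y. (y, z) \<in> A}} = k"
      using reg \<open>x \<in> V\<close> unfolding regular_digraph_def by simp
    fix y assume "y \<in> V" "x \<noteq> y"
    have "card {z\<in>V. x \<in> {y. (y, z) \<in> A} \<and> y \<in> {y. (y, z) \<in> A}}
        = card {z. (x, z) \<in> A \<and> (y, z) \<in> A}"
      using AV by (intro arg_cong[where f = card]) blast
    also have "\<dots> = 1"
      using fr \<open>x \<in> V\<close> \<open>y \<in> V\<close> \<open>x \<noteq> y\<close>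
      unfolding friendship_digraph_def card_Collect_eq_1_iff by blast
    finally show "card {z\<in>V. x \<in> {y. (y, z) \<in> A} \<and> y \<in> {y. (y, z) \<in> A}} = 1" .
  qed (use \<open>finite V\<close> in simp_all)
qed

definition block_digraph :: "'a set \<Rightarrow> ('a \<Rightarrow> 'i) \<Rightarrow> ('i \<Rightarrow> 'a set) \<Rightarrow> ('a \<times> 'a) set" where
  "block_digraph P \<phi> B = {(x, y) \<in> P \<times> P. x \<in> B (\<phi> y)}"

lemma block_digraph_regular:
  assumes "sbibd v k lam P I B" and \<phi>: "bij_betw \<phi> P I" and avoid: "\<forall>x\<in>P. x \<notin> B (\<phi> x)"
  shows "regular_digraph k P (block_digraph P \<phi> B)"
  unfolding regular_digraph_def
proof (intro conjI ballI)
  have "finite P" and blocks: "\<forall>i\<in>I. B i \<subseteq> P \<and> card (B i) = k"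
    and rep: "\<forall>x\<in>P. card {i\<in>I. x \<in> B i} = k"
    using assms(1) unfolding sbibd_def by auto
  show "digraph P (block_digraph P \<phi> B)"
    using \<open>finite P\<close> avoid unfolding digraph_def block_digraph_def by auto
  fix x assume "x \<in> P"
  have "{y. (x, y) \<in> block_digraph P \<phi> B} = {y\<in>P. x \<in> B (\<phi> y)}"
    using \<open>x \<in> P\<close> unfolding block_digraph_def by auto
  then show "card {y. (x, y) \<in> block_digraph P \<phi> B} = k"
    using card_Collect_bij_betw[OF \<phi>, of "\<lambda>i. x \<in> B i"] rep \<open>x \<in> P\<close> by simp
  have "\<phi> x \<in> I" using \<phi> \<open>x \<in> P\<close> bij_betw_apply by fast
  then have "{y. (y, x) \<in> block_digraph P \<phi> B} = B (\<phi> x)"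
    using \<open>x \<in> P\<close> blocks unfolding block_digraph_def by auto
  then show "card {y. (y, x) \<in> block_digraph P \<phi> B} = k"
    using blocks \<open>\<phi> x \<in> I\<close> by simp
qed

lemma block_digraph_friendship:
  assumes design: "sbibd v k 1 P I B" and "v \<ge> 2"
    and \<phi>: "bij_betw \<phi> P I" and avoid: "\<forall>x\<in>P. x \<notin> B (\<phi> x)"
  shows "friendship_digraph P (block_digraph P \<phi> B)"
  unfolding friendship_digraph_def
proof (intro conjI ballI impI)
  show "digraph P (block_digraph P \<phi> B)"
    using block_digraph_regular[OF assms(1) \<phi> avoid] unfolding regular_digraph_def by blast
  show "card P \<ge> 2" using design \<open>v \<ge> 2\<close> unfolding sbibd_def by simp
  fix x y assume "x \<in> P" "y \<in> P" "x \<noteq> y"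
  have "{z. (x, z) \<in> block_digraph P \<phi> B \<and> (y, z) \<in> block_digraph P \<phi> B}
      = {z\<in>P. x \<in> B (\<phi> z) \<and> y \<in> B (\<phi> z)}"
    using \<open>x \<in> P\<close> \<open>y \<in> P\<close> unfolding block_digraph_def by auto
  also have "card \<dots> = 1"
    using card_Collect_bij_betw[OF \<phi>, of "\<lambda>i. x \<in> B i \<and> y \<in> B i"] design \<open>x \<in> P\<close> \<open>y \<in> P\<close> \<open>x \<noteq> y\<close>
    unfolding sbibd_def by simp
  finally show "\<exists>!z. (x, z) \<in> block_digraph P \<phi> B \<and> (y, z) \<in> block_digraph P \<phi> B"
    by (simp only: card_Collect_eq_1_iff)
qed

lemma complete_digraph_three_vertices:
  assumes "card V = 3"
  defines "A \<equiv> {(x, y) \<in> V \<times> V. x \<noteq> y}"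
  shows "regular_digraph 2 V A \<and> friendship_digraph V A"
proof
  have "finite V" by (rule card_ge_0_finite) (simp add: assms)
  then have "digraph V A" unfolding digraph_def A_def by auto
  have "{y. (x, y) \<in> A} = V - {x}" "{y. (y, x) \<in> A} = V - {x}" if "x \<in> V" for x
    using that unfolding A_def by auto
  then show "regular_digraph 2 V A"
    using \<open>digraph V A\<close> \<open>finite V\<close> assms unfolding regular_digraph_def by simp
  show "friendship_digraph V A" unfolding friendship_digraph_def
  proof (intro conjI ballI impI \<open>digraph V A\<close>)
    show "card V \<ge> 2" using assms by simp
    fix x y assume "x \<in> V" "y \<in> V" "x \<noteq> y"
    then have "{z. (x, z) \<in> A \<and> (y, z) \<in> A} = V - {x, y}" unfolding A_def by auto
    also have "card \<dots> = 1"
      using \<open>x \<in> V\<close> \<open>y \<in> V\<close> \<open>x \<noteq> y\<close> \<open>finite V\<close> assms by (simp add: card_Diff_subset)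
    finally show "\<exists>!z. (x, z) \<in> A \<and> (y, z) \<in> A" by (simp only: card_Collect_eq_1_iff)
  qed
qed

theorem theorem1p2:
  fixes k :: nat
  assumes "k \<ge> 2"
  shows "(\<exists>(V :: nat set) A. regular_digraph k V A \<and> friendship_digraph V A) \<longleftrightarrow>
         (\<exists>(P :: nat set) (I :: nat set) (B :: nat \<Rightarrow> nat set). sbibd (k^2 - k + 1) k 1 P I B)"
proof
  assume "\<exists>(V :: nat set) A. regular_digraph k V A \<and> friendship_digraph V A"
  then obtain V :: "nat set" and A where "regular_digraph k V A" "friendship_digraph V A" by blast
  moreover have "k * (k - 1) + 1 = k^2 - k + 1" by (simp add: power2_eq_square diff_mult_distrib2)
  ultimately show "\<exists>(P :: nat set) (I :: nat set) B. sbibd (k^2 - k + 1) k 1 P I B"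
    using regular_friendship_digraph_sbibd regular_friendship_digraph_card by metis
next
  assume "\<exists>(P :: nat set) (I :: nat set) (B :: nat \<Rightarrow> nat set). sbibd (k^2 - k + 1) k 1 P I B"
  then obtain P I :: "nat set" and B where design: "sbibd (k^2 - k + 1) k 1 P I B" by blast
  show "\<exists>(V :: nat set) A. regular_digraph k V A \<and> friendship_digraph V A"
  proof (cases "k = 2")
    case True
    have "card {0, 1, 2 :: nat} = 3" by simp
    then show ?thesis using True complete_digraph_three_vertices by blast
  next
    case False
    then have "3 * k \<le> k * k" using \<open>k \<ge> 2\<close> by (intro mult_right_mono) auto
    then have v: "2 * k < k^2 - k + 1" unfolding power2_eq_square by linarith
    then obtain \<phi> where \<phi>: "bij_betw \<phi> P I" and avoid: "\<forall>x\<in>P. x \<notin> B (\<phi> x)"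
      using design exists_bij_betw_avoiding_blocks[of P I B k] unfolding sbibd_def by auto
    have "k^2 - k + 1 \<ge> 2" using v \<open>k \<ge> 2\<close> by linarith
    then show ?thesis
      using block_digraph_regular[OF design \<phi> avoid] block_digraph_friendship[OF design _ \<phi> avoid]
      by blast
  qed
qed

end
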